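(* Let $S=\langle P,\varphi\rangle$ be a SUT model, $t$ a strength and $N\ge1$ an integer. The optimal cost of the Partial MaxSAT instance $TPMSat_{CCX}^{N,t,S}$ (defined in the context) is $|\mathcal T_a|-T(N;t,S)$.
   Context: A SUT model is $S=\langle P,\varphi\rangle$, where $P$ is a finite set of parameters, each $p\in P$ having a finite nonempty domain $d(p)$, and $\varphi$ is a propositional formula whose atoms have the form $(p=v)$ with $p\in P$, $v\in d(p)$. A test case is a full assignment $A$ giving each $p$ a value in $d(p)$ such that $\varphi$ is true when each atom $(p=v)$ is read as true iff $A(p)=v$; it is assumed that at least one test case exists. Fix a strength $t$ with $1\le t\le|P|$. A $t$-tuple is an assignment of values to exactly $t$ distinct parameters, viewed as a set of pairs $(p,v)$; a test case covers $\tau$ if it assigns $v$ to $p$ for every $(p,v)\in\tau$. A $t$-tuple is allowed if some test case covers it; $\mathcal T_a$ is the set of allowed $t$-tuples. The Tuple Number $T(N;t,S)$ is the maximum number of $t$-tuples covered (each by at least one member) by a list of $N$ test cases. $[N]=\{1,\dots,N\}$. A Partial MaxSAT instance consists of hard constraints and soft clauses $(c,w)$ with positive integer weights; its optimal cost is the minimum, over truth assignments satisfying all hard constraints, of the total weight of falsified soft clauses ($\infty$ if the hard constraints are unsatisfiable). Variables: $x_{i,p,v}$ ($i\in[N]$, $p\in P$, $v\in d(p)$), $c^i_\tau$ ($i\in\{0,\dots,N\}$, $\tau\in\mathcal T_a$). Hard constraints of $TPMSat_{CCX}^{N,t,S}$: (X) for every $i\in[N]$, $p\in P$: exactly one of $\{x_{i,p,v}:v\in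 d(p)\}$ is true; (SUTX) for every $i\in[N]$: the formula obtained from $\varphi$ by replacing each atom $(p=v)$ with $x_{i,p,v}$; (a) for every $i\in[N]$, $\tau\in\mathcal T_a$, $(p,v)\in\tau$: $c^i_\tau\rightarrow(c^{i-1}_\tau\vee x_{i,p,v})$; (c) for every $\tau\in\mathcal T_a$: $c^N_\tau\rightarrow\neg c^0_\tau$. Soft clauses: $(c^N_\tau,1)$ for every $\tau\in\mathcal T_a$. *)

theory Defs
  imports Main "HOL-Library.Extended_Nat"
begin

text \<open>The connective ExactlyOne S
  (S a finite set of atoms) is the cardinality constraint "exactly one atom of S is true",
  used for the hard constraints (X).\<close>

datatype 'a pform =
    Atom 'a
  | PTrue
  | PFalse
  | PNot "'a pform"
  | PAnd "'a pform" "'a pform"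
  | POr "'a pform" "'a pform"
  | PImp "'a pform" "'a pform"
  | ExactlyOne "'a set"

fun peval :: "('a \<Rightarrow> bool) \<Rightarrow> 'a pform \<Rightarrow> bool" where
  "peval \<alpha> (Atom a) = \<alpha> a"
| "peval \<alpha> PTrue = True"
| "peval \<alpha> PFalse = False"
| "peval \<alpha> (PNot f) = (\<not> peval \<alpha> f)"
| "peval \<alpha> (PAnd f g) = (peval \<alpha> f \<and> peval \<alpha> g)"
| "peval \<alpha> (POr f g) = (peval \<alpha> f \<or> peval \<alpha> g)"
| "peval \<alpha> (PImp f g) = (peval \<alpha> f \<longrightarrow> peval \<alpha> g)"
| "peval \<alpha> (ExactlyOne S) = (\<exists>!a. a \<in> S \<and> \<alpha> a)"

fun atoms :: "'a pform \<Rightarrow> 'a set" where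
  "atoms (Atom a) = {a}"
| "atoms PTrue = {}"
| "atoms PFalse = {}"
| "atoms (PNot f) = atoms f"
| "atoms (PAnd f g) = atoms f \<union> atoms g"
| "atoms (POr f g) = atoms f \<union> atoms g"
| "atoms (PImp f g) = atoms f \<union> atoms g"
| "atoms (ExactlyOne S) = S"

fun rename :: "('a \<Rightarrow> 'b) \<Rightarrow> 'a pform \<Rightarrow> 'b pform" where
  "rename g (Atom a) = Atom (g a)"
| "rename g PTrue = PTrue"
| "rename g PFalse = PFalse"
| "rename g (PNot f) = PNot (rename g f)"
| "rename g (PAnd f h) = PAnd (rename g f) (rename g h)"
| "rename g (POr f h) = POr (rename g f) (rename g h)"
| "rename g (PImp f h) = PImp (rename g f) (rename g h)"
| "rename g (ExactlyOne S) = ExactlyOne (g ` S)"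

text \<open>Optimal cost: minimum over assignments satisfying all hard constraints of the total weight
  of falsified soft clauses; infinity (Inf of the empty set in enat) if none exists.\<close>

definition pmaxsat_cost :: "'x pform set \<Rightarrow> ('x pform \<times> nat) set \<Rightarrow> enat" where
  "pmaxsat_cost H Soft =
     (INF \<alpha> \<in> {\<alpha>. \<forall>h\<in>H. peval \<alpha> h}.
        enat (\<Sum>(c, w)\<in>Soft. if peval \<alpha> c then 0 else w))"

definition sut_model :: "'p set \<Rightarrow> ('p \<Rightarrow> 'v set) \<Rightarrow> ('p \<times> 'v) pform \<Rightarrow> bool" where
  "sut_model P d \<phi> \<longleftrightarrow> finite P \<and> (\<forall>p\<in>P. finite (d p) \<and> d p \<noteq> {})
     \<and> (\<forall>(p, v)\<in>atoms \<phi>. p \<in> P \<and> v \<in> d p)"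

definition test_case :: "'p set \<Rightarrow> ('p \<Rightarrow> 'v set) \<Rightarrow> ('p \<times> 'v) pform \<Rightarrow> ('p \<Rightarrow> 'v) \<Rightarrow> bool" where
  "test_case P d \<phi> A \<longleftrightarrow> (\<forall>p\<in>P. A p \<in> d p) \<and> peval (\<lambda>(p, v). A p = v) \<phi>"

definition t_tuple :: "nat \<Rightarrow> 'p set \<Rightarrow> ('p \<Rightarrow> 'v set) \<Rightarrow> ('p \<times> 'v) set \<Rightarrow> bool" where
  "t_tuple t P d \<tau> \<longleftrightarrow> \<tau> \<subseteq> Sigma P d \<and> inj_on fst \<tau> \<and> card \<tau> = t"

definition covers :: "('p \<Rightarrow> 'v) \<Rightarrow> ('p \<times> 'v) set \<Rightarrow> bool" where
  "covers A \<tau> \<longleftrightarrow> (\<forall>(p, v)\<in>\<tau>. A p = v)"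

definition allowed_tuples :: "nat \<Rightarrow> 'p set \<Rightarrow> ('p \<Rightarrow> 'v set) \<Rightarrow> ('p \<times> 'v) pform
    \<Rightarrow> ('p \<times> 'v) set set" where
  "allowed_tuples t P d \<phi> = {\<tau>. t_tuple t P d \<tau> \<and> (\<exists>A. test_case P d \<phi> A \<and> covers A \<tau>)}"

definition tuple_number :: "nat \<Rightarrow> nat \<Rightarrow> 'p set \<Rightarrow> ('p \<Rightarrow> 'v set) \<Rightarrow> ('p \<times> 'v) pform \<Rightarrow> nat" where
  "tuple_number N t P d \<phi> =
     Max {card {\<tau>. t_tuple t P d \<tau> \<and> (\<exists>A\<in>set L. covers A \<tau>)} | L.
            length L = N \<and> (\<forall>A\<in>set L. test_case P d \<phi> A)}"

datatype ('p, 'v) tvar = X nat 'p 'v | C nat "('p \<times> 'v) set"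

definition ccx_hard :: "nat \<Rightarrow> nat \<Rightarrow> 'p set \<Rightarrow> ('p \<Rightarrow> 'v set) \<Rightarrow> ('p \<times> 'v) pform
    \<Rightarrow> ('p, 'v) tvar pform set" where
  "ccx_hard N t P d \<phi> =
     \<comment> \<open>(X)\<close>
     {ExactlyOne {X i p v | v. v \<in> d p} | i p. i \<in> {1..N} \<and> p \<in> P}
     \<comment> \<open>(SUTX)\<close>
   \<union> {rename (\<lambda>(p, v). X i p v) \<phi> | i. i \<in> {1..N}}
     \<comment> \<open>(a)\<close>
   \<union> {PImp (Atom (C i \<tau>)) (POr (Atom (C (i - 1) \<tau>)) (Atom (X i p v))) | i \<tau> p v.
        i \<in> {1..N} \<and> \<tau> \<in> allowed_tuples t P d \<phi> \<and> (p, v) \<in> \<tau>}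
     \<comment> \<open>(c)\<close>
   \<union> {PImp (Atom (C N \<tau>)) (PNot (Atom (C 0 \<tau>))) | \<tau>. \<tau> \<in> allowed_tuples t P d \<phi>}"

definition ccx_soft :: "nat \<Rightarrow> nat \<Rightarrow> 'p set \<Rightarrow> ('p \<Rightarrow> 'v set) \<Rightarrow> ('p \<times> 'v) pform
    \<Rightarrow> (('p, 'v) tvar pform \<times> nat) set" where
  "ccx_soft N t P d \<phi> = {(Atom (C N \<tau>), 1) | \<tau>. \<tau> \<in> allowed_tuples t P d \<phi>}"

end

theory Submission
  imports Defs
begin

(* The x-variables of a model of the hard constraints describe N test cases, by (X) and (SUTX).
   Reading i \<mapsto> c^i_\<tau> as a counter, (c) forces it to rise somewhere between 0 and N whenever
   c^N_\<tau> holds, and (a) says that it can only rise at a step i whose test case covers \<tau>; so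
   at most T(N;t,S) soft clauses hold. Conversely, any N test cases, with c^i_\<tau> read as
   "\<tau> is covered by one of the first i of them", satisfy the hard constraints and make exactly
   the covered tuples true, and a list attaining T(N;t,S) exists. *)

lemma Ex1_image_iff:
  assumes "inj_on g S"
  shows "(\<exists>!a. a \<in> g ` S \<and> P a) \<longleftrightarrow> (\<exists>!b. b \<in> S \<and> P (g b))"
  using assms unfolding inj_on_def by blast

lemma peval_cong:
  "(\<And>a. a \<in> atoms f \<Longrightarrow> \<alpha> a = \<beta> a) \<Longrightarrow> peval \<alpha> f = peval \<beta> f"
  by (induction f) auto

lemma peval_rename:
  "inj g \<Longrightarrow> peval \<alpha> (rename g f) = peval (\<alpha> \<circ> g) f"
  by (induction f) (simp_all add: Ex1_image_iff inj_on_subset[of g UNIV])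

lemma peval_ccx_hard_iff:
  "(\<forall>h\<in>ccx_hard N t P d \<phi>. peval \<alpha> h) \<longleftrightarrow>
     (\<forall>i\<in>{1..N}. \<forall>p\<in>P. \<exists>!v. v \<in> d p \<and> \<alpha> (X i p v)) \<and>
     (\<forall>i\<in>{1..N}. peval (\<lambda>(p, v). \<alpha> (X i p v)) \<phi>) \<and>
     (\<forall>i\<in>{1..N}. \<forall>\<tau>\<in>allowed_tuples t P d \<phi>. \<forall>(p, v)\<in>\<tau>.
        \<alpha> (C i \<tau>) \<longrightarrow> \<alpha> (C (i - 1) \<tau>) \<or> \<alpha> (X i p v)) \<and>
     (\<forall>\<tau>\<in>allowed_tuples t P d \<phi>. \<alpha> (C N \<tau>) \<longrightarrow> \<not> \<alpha> (C 0 \<tau>))"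
proof -
  have X_image: "{X i p v | v. v \<in> d p} = X i p ` d p" for i p
    by auto
  have rename_X:
    "peval \<alpha> (rename (\<lambda>(p, v). X i p v) \<phi>) = peval (\<lambda>(p, v). \<alpha> (X i p v)) \<phi>" for i
    by (simp add: peval_rename inj_def comp_def case_prod_unfold)
  show ?thesis
    unfolding ccx_hard_def ball_Un
    by (simp add: Ball_def imp_ex imp_conjL X_image Ex1_image_iff inj_on_def rename_X)
qed

definition covered_tuples :: "nat \<Rightarrow> 'p set \<Rightarrow> ('p \<Rightarrow> 'v set) \<Rightarrow> ('p \<Rightarrow> 'v) list
    \<Rightarrow> ('p \<times> 'v) set set" where
  "covered_tuples t P d L = {\<tau>. t_tuple t P d \<tau> \<and> (\<exists>A\<in>set L. covers A \<tau>)}"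

definition test_suites :: "nat \<Rightarrow> 'p set \<Rightarrow> ('p \<Rightarrow> 'v set) \<Rightarrow> ('p \<times> 'v) pform
    \<Rightarrow> ('p \<Rightarrow> 'v) list set" where
  "test_suites N P d \<phi> = {L. length L = N \<and> (\<forall>A\<in>set L. test_case P d \<phi> A)}"

lemma tuple_number_eq_Max_covered_tuples:
  "tuple_number N t P d \<phi> = Max ((\<lambda>L. card (covered_tuples t P d L)) ` test_suites N P d \<phi>)"
  unfolding tuple_number_def covered_tuples_def test_suites_def
  by (rule arg_cong[where f = Max]) blast

lemma finite_allowed_tuples:
  assumes "sut_model P d \<phi>"
  shows "finite (allowed_tuples t P d \<phi>)"
proof (rule finite_subset)
  show "allowed_tuples t P d \<phi> \<subseteq> Pow (Sigma P d)"
    unfolding allowed_tuples_def t_tuple_def by auto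
  show "finite (Pow (Sigma P d))"
    using assms unfolding sut_model_def by auto
qed

lemma covered_tuples_subset_allowed_tuples:
  "L \<in> test_suites N P d \<phi> \<Longrightarrow> covered_tuples t P d L \<subseteq> allowed_tuples t P d \<phi>"
  unfolding covered_tuples_def test_suites_def allowed_tuples_def by auto

lemma finite_card_covered_tuples:
  assumes "sut_model P d \<phi>"
  shows "finite ((\<lambda>L. card (covered_tuples t P d L)) ` test_suites N P d \<phi>)"
proof (rule finite_subset)
  show "(\<lambda>L. card (covered_tuples t P d L)) ` test_suites N P d \<phi>
      \<subseteq> {..card (allowed_tuples t P d \<phi>)}"
    using card_mono[OF finite_allowed_tuples[OF assms] covered_tuples_subset_allowed_tuples]
    by auto
qed simp

lemma card_covered_tuples_le_tuple_number:
  assumes "sut_model P d \<phi>" and "L \<in> test_suites N P d \<phi>"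
  shows "card (covered_tuples t P d L) \<le> tuple_number N t P d \<phi>"
  unfolding tuple_number_eq_Max_covered_tuples
  using finite_card_covered_tuples[OF assms(1)] assms(2) by simp

lemma tuple_number_attained:
  assumes "sut_model P d \<phi>" and "test_case P d \<phi> A"
  obtains L where "L \<in> test_suites N P d \<phi>"
    and "card (covered_tuples t P d L) = tuple_number N t P d \<phi>"
proof -
  have "replicate N A \<in> test_suites N P d \<phi>"
    using assms(2) unfolding test_suites_def by simp
  then have "tuple_number N t P d \<phi>
      \<in> (\<lambda>L. card (covered_tuples t P d L)) ` test_suites N P d \<phi>"
    unfolding tuple_number_eq_Max_covered_tuples
    using Max_in[OF finite_card_covered_tuples[OF assms(1)]] by blast
  then show ?thesis
    using that by (metis imageE)
qed

lemma ccx_soft_cost: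
  assumes "finite (allowed_tuples t P d \<phi>)"
  shows "(\<Sum>(c, w)\<in>ccx_soft N t P d \<phi>. if peval \<alpha> c then 0 else w)
    = card (allowed_tuples t P d \<phi>) - card {\<tau> \<in> allowed_tuples t P d \<phi>. \<alpha> (C N \<tau>)}"
proof -
  let ?Al = "allowed_tuples t P d \<phi>"
  have "ccx_soft N t P d \<phi> = (\<lambda>\<tau>. (Atom (C N \<tau>), 1)) ` ?Al"
    unfolding ccx_soft_def by auto
  moreover have "inj_on (\<lambda>\<tau>. (Atom (C N \<tau>), 1 :: nat)) ?Al"
    by (auto simp: inj_on_def)
  ultimately have "(\<Sum>(c, w)\<in>ccx_soft N t P d \<phi>. if peval \<alpha> c then 0 else w)
      = card {\<tau> \<in> ?Al. \<not> \<alpha> (C N \<tau>)}"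
    using assms by (simp add: sum.reindex sum.If_cases del: One_nat_def)
      (rule arg_cong[where f = card], auto)
  also have "{\<tau> \<in> ?Al. \<not> \<alpha> (C N \<tau>)} = ?Al - {\<tau> \<in> ?Al. \<alpha> (C N \<tau>)}"
    by auto
  also have "card \<dots> = card ?Al - card {\<tau> \<in> ?Al. \<alpha> (C N \<tau>)}"
    using assms by (simp add: card_Diff_subset)
  finally show ?thesis .
qed

lemma ex_rising_step:
  fixes c :: "nat \<Rightarrow> bool"
  assumes "\<not> c 0" and "c n"
  shows "\<exists>i\<in>{1..n}. \<not> c (i - 1) \<and> c i"
  using assms(2)
proof (induction n)
  case (Suc n)
  show ?case
  proof (cases "c n")
    case True
    then show ?thesis
      using Suc.IH by force
  next
    case False
    then show ?thesis
      using Suc.prems by force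
  qed
qed (use assms(1) in simp)

definition decoded_test :: "('p \<Rightarrow> 'v set) \<Rightarrow> (('p, 'v) tvar \<Rightarrow> bool) \<Rightarrow> nat \<Rightarrow> 'p \<Rightarrow> 'v" where
  "decoded_test d \<alpha> i p = (THE v. v \<in> d p \<and> \<alpha> (X i p v))"

lemma decoded_test_iff:
  assumes "\<forall>h\<in>ccx_hard N t P d \<phi>. peval \<alpha> h" and "i \<in> {1..N}" and "p \<in> P"
  shows "decoded_test d \<alpha> i p \<in> d p \<and> (\<forall>v\<in>d p. \<alpha> (X i p v) \<longleftrightarrow> decoded_test d \<alpha> i p = v)"
proof -
  have "\<exists>!v. v \<in> d p \<and> \<alpha> (X i p v)"
    using assms unfolding peval_ccx_hard_iff by simp
  then show ?thesis
    unfolding decoded_test_def by (metis (no_types, lifting) theI')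
qed

lemma test_case_decoded_test:
  assumes "sut_model P d \<phi>" and model: "\<forall>h\<in>ccx_hard N t P d \<phi>. peval \<alpha> h"
    and "i \<in> {1..N}"
  shows "test_case P d \<phi> (decoded_test d \<alpha> i)"
proof -
  note decoded = decoded_test_iff[OF model \<open>i \<in> {1..N}\<close>]
  have "peval (\<lambda>(p, v). \<alpha> (X i p v)) \<phi>"
    using model \<open>i \<in> {1..N}\<close> unfolding peval_ccx_hard_iff by simp
  moreover have "(\<lambda>(p, v). \<alpha> (X i p v)) a = (\<lambda>(p, v). decoded_test d \<alpha> i p = v) a"
    if "a \<in> atoms \<phi>" for a
    using decoded assms(1) that unfolding sut_model_def by auto
  ultimately show ?thesis
    unfolding test_case_def using decoded peval_cong by (metis (no_types, lifting))
qed

lemma ccx_model_decodes_to_test_suite: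
  assumes "sut_model P d \<phi>" and model: "\<forall>h\<in>ccx_hard N t P d \<phi>. peval \<alpha> h"
  obtains L where "L \<in> test_suites N P d \<phi>"
    and "{\<tau> \<in> allowed_tuples t P d \<phi>. \<alpha> (C N \<tau>)} \<subseteq> covered_tuples t P d L"
proof -
  define L where "L = map (decoded_test d \<alpha>) [1..<N + 1]"
  have "L \<in> test_suites N P d \<phi>"
    unfolding L_def test_suites_def using test_case_decoded_test[OF assms] by auto
  moreover have "\<tau> \<in> covered_tuples t P d L"
    if \<tau>: "\<tau> \<in> allowed_tuples t P d \<phi>" and "\<alpha> (C N \<tau>)" for \<tau>
  proof -
    have "\<not> \<alpha> (C 0 \<tau>)"
      using model \<tau> \<open>\<alpha> (C N \<tau>)\<close> unfolding peval_ccx_hard_iff by simp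
    then obtain i where i: "i \<in> {1..N}" "\<not> \<alpha> (C (i - 1) \<tau>)" "\<alpha> (C i \<tau>)"
      using ex_rising_step[where c = "\<lambda>i. \<alpha> (C i \<tau>)"] \<open>\<alpha> (C N \<tau>)\<close> by blast
    have "\<tau> \<subseteq> Sigma P d" and "t_tuple t P d \<tau>"
      using \<tau> unfolding allowed_tuples_def t_tuple_def by auto
    moreover have "\<forall>(p, v)\<in>\<tau>. \<alpha> (C i \<tau>) \<longrightarrow> \<alpha> (C (i - 1) \<tau>) \<or> \<alpha> (X i p v)"
      using model i(1) \<tau> unfolding peval_ccx_hard_iff by simp
    then have "\<alpha> (X i p v)" if "(p, v) \<in> \<tau>" for p v
      using i(2,3) that by fastforce
    ultimately have "covers (decoded_test d \<alpha> i) \<tau>"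
      unfolding covers_def using decoded_test_iff[OF model i(1)] by blast
    moreover have "decoded_test d \<alpha> i \<in> set L"
      unfolding L_def set_map set_upt using i(1) by (intro imageI) auto
    ultimately show ?thesis
      unfolding covered_tuples_def using \<open>t_tuple t P d \<tau>\<close> by blast
  qed
  ultimately show ?thesis
    using that by blast
qed

lemma card_ccx_model_le_tuple_number:
  assumes "sut_model P d \<phi>" and "\<forall>h\<in>ccx_hard N t P d \<phi>. peval \<alpha> h"
  shows "card {\<tau> \<in> allowed_tuples t P d \<phi>. \<alpha> (C N \<tau>)} \<le> tuple_number N t P d \<phi>"
proof -
  obtain L where L: "L \<in> test_suites N P d \<phi>"
    and sub: "{\<tau> \<in> allowed_tuples t P d \<phi>. \<alpha> (C N \<tau>)} \<subseteq> covered_tuples t P d L"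
    using ccx_model_decodes_to_test_suite[OF assms] by blast
  have "finite (covered_tuples t P d L)"
    using covered_tuples_subset_allowed_tuples[OF L] finite_allowed_tuples[OF assms(1)]
    by (rule finite_subset)
  then have "card {\<tau> \<in> allowed_tuples t P d \<phi>. \<alpha> (C N \<tau>)} \<le> card (covered_tuples t P d L)"
    using sub by (rule card_mono)
  also have "\<dots> \<le> tuple_number N t P d \<phi>"
    using card_covered_tuples_le_tuple_number[OF assms(1) L] .
  finally show ?thesis .
qed

definition suite_assignment :: "('p \<Rightarrow> 'v) list \<Rightarrow> ('p, 'v) tvar \<Rightarrow> bool" where
  "suite_assignment L x = (case x of
      X i p v \<Rightarrow> (L ! (i - 1)) p = v
    | C i \<tau> \<Rightarrow> (\<exists>A\<in>set (take i L). covers A \<tau>))"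

lemma peval_ccx_hard_suite_assignment:
  assumes "L \<in> test_suites N P d \<phi>"
  shows "\<forall>h\<in>ccx_hard N t P d \<phi>. peval (suite_assignment L) h"
proof -
  have L: "length L = N" "\<And>i. i \<in> {1..N} \<Longrightarrow> test_case P d \<phi> (L ! (i - 1))"
    using assms unfolding test_suites_def by auto
  have take_i: "take i L = take (i - 1) L @ [L ! (i - 1)]" if "i \<in> {1..N}" for i
    using that L(1) by (cases i) (auto simp: take_Suc_conv_app_nth)
  show ?thesis
    unfolding peval_ccx_hard_iff
    using L take_i
    by (auto simp: suite_assignment_def test_case_def covers_def case_prod_unfold)
qed

lemma suite_assignment_final_counters:
  assumes "L \<in> test_suites N P d \<phi>"
  shows "{\<tau> \<in> allowed_tuples t P d \<phi>. suite_assignment L (C N \<tau>)} = covered_tuples t P d L"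
  using assms covered_tuples_subset_allowed_tuples[OF assms]
  unfolding suite_assignment_def covered_tuples_def test_suites_def allowed_tuples_def
  by auto

theorem proposition10:
  fixes P :: "'p set" and d :: "'p \<Rightarrow> 'v set" and \<phi> :: "('p \<times> 'v) pform"
    and N t :: nat
  assumes "sut_model P d \<phi>"
    and "\<exists>A. test_case P d \<phi> A"
    and "1 \<le> t" and "t \<le> card P"
    and "1 \<le> N"
  shows "pmaxsat_cost (ccx_hard N t P d \<phi>) (ccx_soft N t P d \<phi>)
         = enat (card (allowed_tuples t P d \<phi>) - tuple_number N t P d \<phi>)"
proof -
  let ?Al = "allowed_tuples t P d \<phi>" and ?T = "tuple_number N t P d \<phi>"
  let ?models = "{\<alpha>. \<forall>h\<in>ccx_hard N t P d \<phi>. peval \<alpha> h}"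
    and ?cost = "\<lambda>\<alpha>. enat (card ?Al - card {\<tau> \<in> ?Al. \<alpha> (C N \<tau>)})"
  have "pmaxsat_cost (ccx_hard N t P d \<phi>) (ccx_soft N t P d \<phi>)
      = (INF \<alpha>\<in>?models. ?cost \<alpha>)"
    unfolding pmaxsat_cost_def
    using ccx_soft_cost[OF finite_allowed_tuples[OF assms(1)]] by simp
  also have "\<dots> = enat (card ?Al - ?T)"
  proof (rule antisym)
    obtain L where L: "L \<in> test_suites N P d \<phi>" and "card (covered_tuples t P d L) = ?T"
      using tuple_number_attained assms(1,2) by blast
    then show "(INF \<alpha>\<in>?models. ?cost \<alpha>) \<le> enat (card ?Al - ?T)"
      using peval_ccx_hard_suite_assignment[OF L] suite_assignment_final_counters[OF L]
      by (intro INF_lower2[of "suite_assignment L"]) auto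
  next
    show "enat (card ?Al - ?T) \<le> (INF \<alpha>\<in>?models. ?cost \<alpha>)"
      using card_ccx_model_le_tuple_number[OF assms(1)]
      by (intro INF_greatest) (auto intro: diff_le_mono2)
  qed
  finally show ?thesis .
qed

end
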